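(* Let $\mathcal G=(\mathcal V,\mathcal E,W)$ be a network, $h\in\mathbb{R}^{\mathcal V}$, and consider the SNC game with binary actions on $\mathcal G$ with external field $h$, with set of Nash equilibria $\mathcal N$. Let $\mathcal V=\mathcal R\cup\mathcal S$, $\mathcal R\cap\mathcal S=\emptyset$, be a binary partition such that $\mathcal G_{\mathcal R}$ is structurally balanced and $\mathcal G_{\mathcal S}$ is undirected. If there exists $\tau\in\{\pm1\}^{\mathcal R}$ such that $\tau_iW_{ij}\tau_j\ge0$ for all $i,j\in\mathcal R$ and $w_i^{\mathcal R}+\tau_ih_i\ge w_i^{\mathcal S}$ for all $i\in\mathcal R$, then there exists a Nash equilibrium $x^*\in\mathcal N$ with $x^*_{\mathcal R}=\tau$.
   Context: A network is a triple $\mathcal G=(\mathcal V,\mathcal E,W)$ where $\mathcal V$ is a finite nonempty set, $\mathcal E\subseteq\mathcal V\times\mathcal V$, and $W\in\mathbb{R}^{\mathcal V\times\mathcal V}$ has zero diagonal and satisfies $W_{ij}\neq0$ iff $(i,j)\in\mathcal E$ (weights may have either sign). It is undirected if its weight matrix is symmetric. For $\mathcal U\subseteq\mathcal V$, the subnetwork $\mathcal G_{\mathcal U}$ has node set $\mathcal U$, links $\mathcal E\cap(\mathcal U\times\mathcal U)$ and weight matrix $W_{\mathcal U\mathcal U}$. A network is structurally balanced if its node set can be written as a disjoint union of two sets with nonnegative weights on links within each set and nonpositive weights on links between the two sets. For $i\in\mathcal V$ and $\mathcal B\subseteq\mathcal V$, $w_i^{\mathcal B}=\sum_{j\in\mathcal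 B}|W_{ij}|$. The SNC game with binary actions on $\mathcal G$ with external field $h\in\mathbb{R}^{\mathcal V}$ has player set $\mathcal V$, action set $\{-1,+1\}$ for each player, strategy profiles $\mathcal X=\{\pm1\}^{\mathcal V}$, and utilities $u_i(x)=h_ix_i+x_i\sum_{j\in\mathcal V}W_{ij}x_j$. A Nash equilibrium is $x^*$ with $x^*_i\in\arg\max_{a\in\{\pm1\}}u_i(a,x^*_{-i})$ for all $i$. *)

theory Defs
  imports Complex_Main "HOL-Library.FuncSet"
begin

definition network :: "'a set \<Rightarrow> ('a \<times> 'a) set \<Rightarrow> ('a \<Rightarrow> 'a \<Rightarrow> real) \<Rightarrow> bool" where
  "network V E W \<longleftrightarrow> finite V \<and> V \<noteq> {} \<and> E \<subseteq> V \<times> V \<and>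
     (\<forall>i\<in>V. W i i = 0) \<and> (\<forall>i\<in>V. \<forall>j\<in>V. W i j \<noteq> 0 \<longleftrightarrow> (i, j) \<in> E)"

definition undirected_on :: "'a set \<Rightarrow> ('a \<Rightarrow> 'a \<Rightarrow> real) \<Rightarrow> bool" where
  "undirected_on U W \<longleftrightarrow> (\<forall>i\<in>U. \<forall>j\<in>U. W i j = W j i)"

definition structurally_balanced_on :: "'a set \<Rightarrow> ('a \<Rightarrow> 'a \<Rightarrow> real) \<Rightarrow> bool" where
  "structurally_balanced_on U W \<longleftrightarrow>
     (\<exists>A B. A \<union> B = U \<and> A \<inter> B = {} \<and>
        (\<forall>i\<in>A. \<forall>j\<in>A. W i j \<ge> 0) \<and> (\<forall>i\<in>B. \<forall>j\<in>B. W i j \<ge> 0) \<and>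
        (\<forall>i\<in>A. \<forall>j\<in>B. W i j \<le> 0 \<and> W j i \<le> 0))"

definition wsum :: "('a \<Rightarrow> 'a \<Rightarrow> real) \<Rightarrow> 'a \<Rightarrow> 'a set \<Rightarrow> real" where
  "wsum W i B = (\<Sum>j\<in>B. \<bar>W i j\<bar>)"

definition profiles :: "'a set \<Rightarrow> ('a \<Rightarrow> real) set" where
  "profiles V = V \<rightarrow>\<^sub>E {-1, 1}"

definition utility :: "'a set \<Rightarrow> ('a \<Rightarrow> 'a \<Rightarrow> real) \<Rightarrow> ('a \<Rightarrow> real) \<Rightarrow> 'a \<Rightarrow> ('a \<Rightarrow> real) \<Rightarrow> real" where
  "utility V W h i x = h i * x i + x i * (\<Sum>j\<in>V. W i j * x j)"

definition nash_eq :: "'a set \<Rightarrow> ('a \<Rightarrow> 'a \<Rightarrow> real) \<Rightarrow> ('a \<Rightarrow> real) \<Rightarrow> ('a \<Rightarrow> real) \<Rightarrow> bool" where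
  "nash_eq V W h x \<longleftrightarrow> x \<in> profiles V \<and>
     (\<forall>i\<in>V. \<forall>a\<in>{-1, 1::real}. utility V W h i (x(i := a)) \<le> utility V W h i x)"

end

theory Submission
  imports Defs
begin

text \<open>Freeze the players of \<open>R\<close> at \<open>\<tau>\<close>. The players of \<open>S\<close> then play the SNC game on the undirected
  network \<open>G\<^sub>S\<close> with external field \<open>h\<^sub>i + \<Sum>\<^sub>j\<^sub>\<in>\<^sub>R W\<^sub>i\<^sub>j \<tau>\<^sub>j\<close>, which is a potential game: a maximiser of the
  potential is a Nash equilibrium, since a unilateral switch of player \<open>i\<close> changes the potential by
  twice the change of \<open>i\<close>'s utility. The hypothesis on \<open>\<tau>\<close> makes \<open>\<tau>\<^sub>i\<close> a best response of every
  \<open>i \<in> R\<close> whatever \<open>S\<close> plays: multiplied by \<open>\<tau>\<^sub>i\<close>, the part of the field seen by \<open>i\<close> that comes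
  from \<open>R\<close> is exactly \<open>w\<^sub>i\<^sup>R\<close> and the part coming from \<open>S\<close> is at least \<open>-w\<^sub>i\<^sup>S\<close>. Structural balance
  of \<open>G\<^sub>R\<close> is then automatic (split \<open>R\<close> by the sign of \<open>\<tau>\<close>).\<close>

lemma finite_profiles: "finite V \<Longrightarrow> finite (profiles V)"
  unfolding profiles_def by (intro finite_PiE) auto

lemma profiles_nonempty: "profiles V \<noteq> {}"
  unfolding profiles_def by (simp add: PiE_eq_empty_iff)

lemma profiles_values: "x \<in> profiles V \<Longrightarrow> i \<in> V \<Longrightarrow> x i \<in> {-1, 1}"
  unfolding profiles_def by (rule PiE_mem)

lemma profiles_fun_upd: "x \<in> profiles V \<Longrightarrow> i \<in> V \<Longrightarrow> b \<in> {-1, 1} \<Longrightarrow> x(i := b) \<in> profiles V"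
  unfolding profiles_def using PiE_fun_upd[of b "\<lambda>_. {-1, 1}" i x V] by (simp add: insert_absorb)

definition local_field :: "'a set \<Rightarrow> ('a \<Rightarrow> 'a \<Rightarrow> real) \<Rightarrow> ('a \<Rightarrow> real) \<Rightarrow> ('a \<Rightarrow> real) \<Rightarrow> 'a \<Rightarrow> real" where
  "local_field V W h x i = h i + (\<Sum>j\<in>V. W i j * x j)"

lemma utility_update_diff:
  assumes "W i i = 0"
  shows "utility V W h i (x(i := a)) - utility V W h i x = (a - x i) * local_field V W h x i"
proof -
  have "(\<Sum>j\<in>V. W i j * (x(i := a)) j) = (\<Sum>j\<in>V. W i j * x j)"
    using assms by (intro sum.cong) auto
  then show ?thesis
    unfolding utility_def local_field_def by (simp add: algebra_simps)
qed

lemma nash_eq_iff_aligned: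
  assumes "\<forall>i\<in>V. W i i = 0"
  shows "nash_eq V W h x \<longleftrightarrow> x \<in> profiles V \<and> (\<forall>i\<in>V. x i * local_field V W h x i \<ge> 0)"
proof -
  have best_response_iff:
    "(\<forall>a\<in>{-1, 1::real}. utility V W h i (x(i := a)) \<le> utility V W h i x) \<longleftrightarrow>
       x i * local_field V W h x i \<ge> 0"
    if "i \<in> V" "x i \<in> {-1, 1}" for i
  proof -
    have "utility V W h i (x(i := a)) \<le> utility V W h i x \<longleftrightarrow> (a - x i) * local_field V W h x i \<le> 0"
      for a
      using utility_update_diff[of W i V h x a] assms \<open>i \<in> V\<close> by auto
    moreover have "(\<forall>a\<in>{-1, 1::real}. (a - x i) * local_field V W h x i \<le> 0) \<longleftrightarrow>
        x i * local_field V W h x i \<ge> 0"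
      using \<open>x i \<in> {-1, 1}\<close> by (elim insertE) auto
    ultimately show ?thesis by simp
  qed
  show ?thesis
    unfolding nash_eq_def using best_response_iff by (auto simp: profiles_def)
qed

lemma sum_mult_fun_upd:
  fixes c x :: "'a \<Rightarrow> 'b::comm_ring"
  assumes "finite V" "k \<in> V"
  shows "(\<Sum>j\<in>V. c j * (x(k := a)) j) = (\<Sum>j\<in>V. c j * x j) + c k * (a - x k)"
proof -
  have "(\<Sum>j\<in>V. c j * (x(k := a)) j) = (\<Sum>j\<in>V. c j * x j + (if j = k then c k * (a - x k) else 0))"
    by (intro sum.cong) (auto simp: algebra_simps)
  then show ?thesis
    using assms by (simp add: sum.distrib)
qed

lemma quadratic_form_fun_upd:
  fixes W :: "'a \<Rightarrow> 'a \<Rightarrow> real"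
  assumes "finite V" "k \<in> V" "undirected_on V W" "W k k = 0"
  shows "(\<Sum>i\<in>V. \<Sum>j\<in>V. W i j * (x(k := a)) i * (x(k := a)) j)
       = (\<Sum>i\<in>V. \<Sum>j\<in>V. W i j * x i * x j) + 2 * (a - x k) * (\<Sum>j\<in>V. W k j * x j)"
proof -
  define L where "L i = (\<Sum>j\<in>V. W i j * x j)" for i
  have as_linear: "(\<Sum>i\<in>V. \<Sum>j\<in>V. W i j * y i * y j) = (\<Sum>i\<in>V. (\<Sum>j\<in>V. W i j * y j) * y i)"
    for y :: "'a \<Rightarrow> real"
    by (simp add: sum_distrib_left sum_distrib_right mult_ac)
  have row_upd: "(\<Sum>j\<in>V. W i j * (x(k := a)) j) = L i + W i k * (a - x k)" for i
    unfolding L_def using sum_mult_fun_upd[OF assms(1,2)] .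
  have column_k: "(\<Sum>i\<in>V. W i k * x i) = L k"
    unfolding L_def using assms(2,3) by (intro sum.cong) (auto simp: undirected_on_def)
  have "(\<Sum>i\<in>V. (L i + W i k * (a - x k)) * (x(k := a)) i)
      = (\<Sum>i\<in>V. L i * (x(k := a)) i) + (a - x k) * (\<Sum>i\<in>V. W i k * (x(k := a)) i)"
    unfolding distrib_right sum.distrib by (simp add: sum_distrib_left mult_ac)
  also have "\<dots> = (\<Sum>i\<in>V. L i * x i) + 2 * (a - x k) * L k"
    using sum_mult_fun_upd[OF assms(1,2), of L x a] sum_mult_fun_upd[OF assms(1,2), of "\<lambda>i. W i k" x a]
      column_k assms(4) by (simp add: algebra_simps)
  finally show ?thesis
    unfolding as_linear row_upd by (simp add: L_def mult.commute)
qed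

definition snc_potential :: "'a set \<Rightarrow> ('a \<Rightarrow> 'a \<Rightarrow> real) \<Rightarrow> ('a \<Rightarrow> real) \<Rightarrow> ('a \<Rightarrow> real) \<Rightarrow> real" where
  "snc_potential V W h x = (\<Sum>j\<in>V. 2 * h j * x j) + (\<Sum>i\<in>V. \<Sum>j\<in>V. W i j * x i * x j)"

lemma snc_potential_fun_upd:
  assumes "finite V" "k \<in> V" "undirected_on V W" "W k k = 0"
  shows "snc_potential V W h (x(k := a))
       = snc_potential V W h x + 2 * (a - x k) * local_field V W h x k"
  using sum_mult_fun_upd[OF assms(1,2), of "\<lambda>j. 2 * h j" x a] quadratic_form_fun_upd[OF assms, of x a]
  unfolding snc_potential_def local_field_def by (simp add: algebra_simps)

lemma undirected_snc_game_has_nash_eq: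
  assumes "finite V" "undirected_on V W" "\<forall>i\<in>V. W i i = 0"
  shows "\<exists>x. nash_eq V W h x"
proof -
  let ?\<Phi> = "snc_potential V W h"
  obtain x where x: "x \<in> profiles V" "?\<Phi> x = Max (?\<Phi> ` profiles V)"
    using Max_in[of "?\<Phi> ` profiles V"] finite_profiles[OF assms(1)] profiles_nonempty by fastforce
  have "x i * local_field V W h x i \<ge> 0" if "i \<in> V" for i
  proof -
    have "x(i := - x i) \<in> profiles V"
      using profiles_values[OF x(1) \<open>i \<in> V\<close>] by (intro profiles_fun_upd[OF x(1) \<open>i \<in> V\<close>]) auto
    then have "?\<Phi> (x(i := - x i)) \<le> ?\<Phi> x"
      using x(2) finite_profiles[OF assms(1)] by simp
    then show ?thesis
      using snc_potential_fun_upd[OF assms(1) \<open>i \<in> V\<close> assms(2), of h x "- x i"] assms(3) \<open>i \<in> V\<close>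
      by simp
  qed
  then show ?thesis
    using nash_eq_iff_aligned[of V W h x] assms(3) x(1) by blast
qed

lemma local_field_union:
  assumes "finite R" "finite S" "R \<inter> S = {}"
  shows "local_field (R \<union> S) W h x i = local_field S W (\<lambda>i. h i + (\<Sum>j\<in>R. W i j * x j)) x i"
  unfolding local_field_def using assms by (simp add: sum.union_disjoint)

lemma abs_weighted_sum_le_wsum:
  assumes "\<forall>j\<in>B. \<bar>x j\<bar> \<le> 1"
  shows "\<bar>\<Sum>j\<in>B. W i j * x j\<bar> \<le> wsum W i B"
proof -
  have "\<bar>\<Sum>j\<in>B. W i j * x j\<bar> \<le> (\<Sum>j\<in>B. \<bar>W i j\<bar> * \<bar>x j\<bar>)"
    using sum_abs[of "\<lambda>j. W i j * x j" B] by (simp add: abs_mult)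
  also have "\<dots> \<le> (\<Sum>j\<in>B. \<bar>W i j\<bar>)"
    using assms by (intro sum_mono) (simp add: mult_left_le)
  finally show ?thesis
    unfolding wsum_def .
qed

lemma aligned_weighted_sum_eq_wsum:
  assumes "s \<in> {-1, 1}" "\<forall>j\<in>B. x j \<in> {-1, 1}" "\<forall>j\<in>B. s * W i j * x j \<ge> 0"
  shows "s * (\<Sum>j\<in>B. W i j * x j) = wsum W i B"
  unfolding wsum_def sum_distrib_left
proof (intro sum.cong refl)
  fix j assume "j \<in> B"
  then have "\<bar>s * W i j * x j\<bar> = \<bar>W i j\<bar>"
    using assms(1,2) by (auto simp: abs_mult)
  then show "s * (W i j * x j) = \<bar>W i j\<bar>"
    using assms(3) \<open>j \<in> B\<close> by (simp add: mult.assoc)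
qed

lemma profiles_if_union:
  assumes "\<forall>i\<in>R. \<tau> i \<in> {-1, 1}" "y \<in> profiles S"
  shows "(\<lambda>i. if i \<in> R then \<tau> i else y i) \<in> profiles (R \<union> S)"
  unfolding profiles_def PiE_iff
proof
  show "\<forall>i\<in>R \<union> S. (if i \<in> R then \<tau> i else y i) \<in> {-1, 1}"
    using assms(1) profiles_values[OF assms(2)] by auto
  show "(\<lambda>i. if i \<in> R then \<tau> i else y i) \<in> extensional (R \<union> S)"
    unfolding extensional_def using PiE_arb[OF assms(2)[unfolded profiles_def]] by simp
qed

lemma nash_eq_extend:
  fixes R S :: "'a set" and W :: "'a \<Rightarrow> 'a \<Rightarrow> real" and h \<tau> :: "'a \<Rightarrow> real"
  defines "c \<equiv> \<lambda>i. h i + (\<Sum>j\<in>R. W i j * \<tau> j)"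
  assumes "finite R" "finite S" "R \<inter> S = {}" "\<forall>i\<in>R \<union> S. W i i = 0"
    and "\<forall>i\<in>R. \<tau> i \<in> {-1, 1}" "nash_eq S W c y"
    and "\<forall>i\<in>R. \<tau> i * local_field S W c y i \<ge> 0"
  shows "nash_eq (R \<union> S) W h (\<lambda>i. if i \<in> R then \<tau> i else y i)"
proof -
  let ?x = "\<lambda>i. if i \<in> R then \<tau> i else y i"
  have y: "y \<in> profiles S" "\<forall>i\<in>S. y i * local_field S W c y i \<ge> 0"
    using assms(5,7) nash_eq_iff_aligned[of S W c y] by auto
  have "local_field (R \<union> S) W h ?x i = local_field S W c y i" for i
    unfolding local_field_union[OF assms(2-4)] using assms(4)
    by (auto simp: local_field_def c_def intro!: sum.cong)
  then have "\<forall>i\<in>R \<union> S. ?x i * local_field (R \<union> S) W h ?x i \<ge> 0"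
    using assms(8) y(2) by auto
  then show ?thesis
    using nash_eq_iff_aligned[of "R \<union> S" W h ?x] assms(5) profiles_if_union[OF assms(6) y(1)] by blast
qed

lemma aligned_if_wsum_dominates:
  assumes "\<tau> i \<in> {-1, 1}" "\<forall>j\<in>R. \<tau> j \<in> {-1, 1}" "\<forall>j\<in>R. \<tau> i * W i j * \<tau> j \<ge> 0"
    and "\<forall>j\<in>S. \<bar>y j\<bar> \<le> 1" "wsum W i R + \<tau> i * h i \<ge> wsum W i S"
  shows "\<tau> i * local_field S W (\<lambda>i. h i + (\<Sum>j\<in>R. W i j * \<tau> j)) y i \<ge> 0"
proof -
  have "\<tau> i * (\<Sum>j\<in>R. W i j * \<tau> j) = wsum W i R"
    using assms(1-3) by (rule aligned_weighted_sum_eq_wsum)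
  moreover have "\<bar>\<tau> i * (\<Sum>j\<in>S. W i j * y j)\<bar> \<le> wsum W i S"
    using abs_weighted_sum_le_wsum[OF assms(4)] assms(1) by (auto simp: abs_mult)
  ultimately show ?thesis
    using assms(5) unfolding local_field_def by (simp add: distrib_left abs_le_iff)
qed

theorem corollary2:
  fixes V R S :: "'a set" and E :: "('a \<times> 'a) set"
    and W :: "'a \<Rightarrow> 'a \<Rightarrow> real" and h \<tau> :: "'a \<Rightarrow> real"
  assumes "network V E W"
    and "R \<union> S = V" and "R \<inter> S = {}"
    and "structurally_balanced_on R W"
    and "undirected_on S W"
    and "\<forall>i\<in>R. \<tau> i \<in> {-1, 1}"
    and "\<forall>i\<in>R. \<forall>j\<in>R. \<tau> i * W i j * \<tau> j \<ge> 0"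
    and "\<forall>i\<in>R. wsum W i R + \<tau> i * h i \<ge> wsum W i S"
  shows "\<exists>x. nash_eq V W h x \<and> (\<forall>i\<in>R. x i = \<tau> i)"
proof -
  have "finite V" and zero_diag: "\<forall>i\<in>V. W i i = 0"
    using assms(1) unfolding network_def by auto
  then have "finite R" "finite S"
    using assms(2) by auto
  define c where "c i = h i + (\<Sum>j\<in>R. W i j * \<tau> j)" for i
  obtain y where y: "nash_eq S W c y"
    using undirected_snc_game_has_nash_eq[OF \<open>finite S\<close> assms(5)] zero_diag assms(2) by blast
  have "\<forall>j\<in>S. \<bar>y j\<bar> \<le> 1"
    using y profiles_values unfolding nash_eq_def by fastforce
  then have "\<forall>i\<in>R. \<tau> i * local_field S W c y i \<ge> 0"
    using assms(6-8) aligned_if_wsum_dominates[of \<tau>] unfolding c_def by blast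
  then have "nash_eq V W h (\<lambda>i. if i \<in> R then \<tau> i else y i)"
    using nash_eq_extend[OF \<open>finite R\<close> \<open>finite S\<close> assms(3)] zero_diag assms(2,6) y
    unfolding c_def by blast
  then show ?thesis
    by auto
qed

end
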